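(* Let $G_{n\times n}$ denote the $n\times n$ square grid graph and $\pi_{\mathrm{opt}}(G_{n\times n})$ its optimal pebbling number. Then the limit $$\lim_{n\to\infty}\frac{n^2}{\pi_{\mathrm{opt}}(G_{n\times n})}$$ exists.
   Context: A pebble distribution on a graph $G$ is a function $D:V(G)\to\mathbb{N}$; its size is $|D|=\sum_v D(v)$. A pebbling move along an edge $vu$ with $D(v)\ge 2$ removes two pebbles from $v$ and adds one pebble to $u$. A vertex $v$ is reachable under $D$ if $D(v)\ge 1$ or there is a sequence of pebbling moves whose last move places a pebble on $v$. $D$ is solvable if every vertex is reachable. The optimal pebbling number $\pi_{\mathrm{opt}}(G)$ is the minimum size of a solvable distribution on $G$. The $n\times n$ grid $G_{n\times n}$ is the Cartesian product of two paths on $n$ vertices. *)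

theory Defs
  imports "HOL-Analysis.Analysis"
begin

text \<open>A graph is given by a vertex set V and a symmetric adjacency relation E.
  A distribution is a function D :: 'a \<Rightarrow> nat (only values on V matter).\<close>

definition pebble_move :: "('a \<Rightarrow> 'a \<Rightarrow> bool) \<Rightarrow> 'a \<Rightarrow> 'a \<Rightarrow> ('a \<Rightarrow> nat) \<Rightarrow> ('a \<Rightarrow> nat) \<Rightarrow> bool" where
  "pebble_move E v u D D' \<longleftrightarrow> E v u \<and> D v \<ge> 2 \<and>
     D' = (D(v := D v - 2))(u := (D(v := D v - 2)) u + 1)"

definition one_move :: "('a \<Rightarrow> 'a \<Rightarrow> bool) \<Rightarrow> ('a \<Rightarrow> nat) \<Rightarrow> ('a \<Rightarrow> nat) \<Rightarrow> bool" where
  "one_move E D D' \<longleftrightarrow> (\<exists>v u. pebble_move E v u D D')"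

definition reachable :: "('a \<Rightarrow> 'a \<Rightarrow> bool) \<Rightarrow> ('a \<Rightarrow> nat) \<Rightarrow> 'a \<Rightarrow> bool" where
  "reachable E D t \<longleftrightarrow> D t \<ge> 1 \<or>
     (\<exists>D1 D2 v. (one_move E)\<^sup>*\<^sup>* D D1 \<and> pebble_move E v t D1 D2)"

definition solvable :: "'a set \<Rightarrow> ('a \<Rightarrow> 'a \<Rightarrow> bool) \<Rightarrow> ('a \<Rightarrow> nat) \<Rightarrow> bool" where
  "solvable V E D \<longleftrightarrow> (\<forall>t\<in>V. reachable E D t)"

definition opt_pebbling :: "'a set \<Rightarrow> ('a \<Rightarrow> 'a \<Rightarrow> bool) \<Rightarrow> nat" where
  "opt_pebbling V E = (LEAST k. \<exists>D. (\<forall>x. x \<notin> V \<longrightarrow> D x = 0) \<and> solvable V E D \<and> (\<Sum>x\<in>V. D x) = k)"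

definition grid_V :: "nat \<Rightarrow> (nat \<times> nat) set" where
  "grid_V n = {0..<n} \<times> {0..<n}"

definition grid_E :: "nat \<Rightarrow> nat \<times> nat \<Rightarrow> nat \<times> nat \<Rightarrow> bool" where
  "grid_E n p q \<longleftrightarrow> p \<in> grid_V n \<and> q \<in> grid_V n \<and>
     ((fst p = fst q \<and> (snd p + 1 = snd q \<or> snd q + 1 = snd p)) \<or>
      (snd p = snd q \<and> (fst p + 1 = fst q \<or> fst q + 1 = fst p)))"

end

theory Submission
  imports Defs
begin

text \<open>Tiling the \<open>m \<times> m\<close> grid by \<open>k\<^sup>2\<close> copies of
  the \<open>n \<times> n\<close> grid (for \<open>m \<le> k n\<close>) and folding the copies onto it with a map that
  contracts edges but never breaks them gives \<open>\<pi>(m) \<le> k\<^sup>2 \<pi>(n)\<close>. Weighting each pebble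
  by \<open>2^-d\<close>, where \<open>d\<close> is its grid distance to a fixed target, yields a quantity that no
  pebbling move increases and that is at least 1 if the target is reachable; summing over
  all targets gives \<open>n\<^sup>2 \<le> 9 \<pi>(n)\<close>. Together these show that \<open>b(m) = m\<^sup>2/\<pi>(m)\<close>
  satisfies \<open>b(m) \<ge> b(n) - 18 n/m\<close>, so the bounded sequence \<open>b\<close> converges to its supremum.\<close>

section \<open>Pebbling on arbitrary graphs\<close>

lemma pebble_move_count:
  assumes "pebble_move E v u D D'"
  shows "D' x + (if x = v then 2 else 0) = D x + (if x = u then 1 else 0)"
  using assms unfolding pebble_move_def by auto

lemma reachable_iff_rtranclp:
  "reachable E D t \<longleftrightarrow> (\<exists>D'. (one_move E)\<^sup>*\<^sup>* D D' \<and> 1 \<le> D' t)"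
proof
  assume "reachable E D t"
  then show "\<exists>D'. (one_move E)\<^sup>*\<^sup>* D D' \<and> 1 \<le> D' t"
    unfolding reachable_def
  proof (elim disjE exE conjE)
    fix D1 D2 v assume "(one_move E)\<^sup>*\<^sup>* D D1" and move: "pebble_move E v t D1 D2"
    then have "(one_move E)\<^sup>*\<^sup>* D D2"
      by (metis one_move_def rtranclp.rtrancl_into_rtrancl)
    moreover have "1 \<le> D2 t" using move by (simp add: pebble_move_def)
    ultimately show ?thesis by blast
  qed blast
next
  assume "\<exists>D'. (one_move E)\<^sup>*\<^sup>* D D' \<and> 1 \<le> D' t"
  then obtain D' where "(one_move E)\<^sup>*\<^sup>* D D'" "1 \<le> D' t" by blast
  then show "reachable E D t"
  proof (induction rule: rtranclp_induct)
    case base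
    then show ?case by (simp add: reachable_def)
  next
    case (step D1 D2)
    then obtain v u where move: "pebble_move E v u D1 D2" by (auto simp: one_move_def)
    show ?case
    proof (cases "u = t")
      case True
      then show ?thesis using step.hyps(1) move unfolding reachable_def by blast
    next
      case False
      then have "D2 t \<le> D1 t" using pebble_move_count[OF move, of t] by (auto split: if_splits)
      then show ?thesis using step by simp
    qed
  qed
qed

lemma pebble_move_mono:
  assumes "pebble_move E v u D1 D2" "\<And>x. D1 x \<le> D1' x"
  obtains D2' where "pebble_move E v u D1' D2'" "\<And>x. D2 x \<le> D2' x"
proof -
  define D2' where "D2' = (D1'(v := D1' v - 2))(u := (D1'(v := D1' v - 2)) u + 1)"
  have "2 \<le> D1' v" using assms unfolding pebble_move_def by (metis order_trans)
  then have move': "pebble_move E v u D1' D2'"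
    using assms(1) unfolding pebble_move_def D2'_def by auto
  have "D2 x \<le> D2' x" for x
    using pebble_move_count[OF move', of x] pebble_move_count[OF assms(1), of x] assms(2)[of x]
    by (auto split: if_splits)
  with move' show thesis by (rule that)
qed

lemma one_move_rtranclp_mono:
  assumes "(one_move E)\<^sup>*\<^sup>* D1 D2" "\<And>x. D1 x \<le> D1' x"
  obtains D2' where "(one_move E)\<^sup>*\<^sup>* D1' D2'" "\<And>x. D2 x \<le> D2' x"
proof -
  from assms(1) have "\<exists>D2'. (one_move E)\<^sup>*\<^sup>* D1' D2' \<and> (\<forall>x. D2 x \<le> D2' x)"
  proof (induction rule: rtranclp_induct)
    case base
    then show ?case using assms(2) by blast
  next
    case (step Y Z)
    then obtain Y' where Y': "(one_move E)\<^sup>*\<^sup>* D1' Y'" "\<forall>x. Y x \<le> Y' x" by blast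
    from step.hyps(2) obtain v u where "pebble_move E v u Y Z" by (auto simp: one_move_def)
    then obtain Z' where "pebble_move E v u Y' Z'" "\<forall>x. Z x \<le> Z' x"
      using Y'(2) by (metis pebble_move_mono)
    then show ?case using Y'(1) by (metis one_move_def rtranclp.rtrancl_into_rtrancl)
  qed
  then show thesis using that by blast
qed

lemma reachable_mono:
  assumes "reachable E D t" "\<And>x. D x \<le> D' x"
  shows "reachable E D' t"
proof -
  obtain Y where Y: "(one_move E)\<^sup>*\<^sup>* D Y" "1 \<le> Y t"
    using assms(1) reachable_iff_rtranclp by metis
  obtain Z where "(one_move E)\<^sup>*\<^sup>* D' Z" "\<And>x. Y x \<le> Z x"
    using one_move_rtranclp_mono[OF Y(1) assms(2)] by blast
  then show ?thesis using Y(2) reachable_iff_rtranclp by (metis le_trans)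
qed

text \<open>If \<open>\<phi>\<close> maps every edge to an edge or to a single vertex, every pebbling sequence
  of \<open>D\<close> is shadowed by one of its image: a move along a contracted edge only loses a pebble.\<close>

definition pebble_image :: "'a set \<Rightarrow> ('a \<Rightarrow> 'b) \<Rightarrow> ('a \<Rightarrow> nat) \<Rightarrow> 'b \<Rightarrow> nat" where
  "pebble_image V \<phi> D y = (\<Sum>x\<in>V. if \<phi> x = y then D x else 0)"

lemma pebble_image_move_count:
  assumes "finite V" "v \<in> V" "u \<in> V" "pebble_move E v u D D'"
  shows "pebble_image V \<phi> D' y + (if \<phi> v = y then 2 else 0)
       = pebble_image V \<phi> D y + (if \<phi> u = y then 1 else 0)"
proof -
  have "(if \<phi> x = y then D' x else 0) + (if x = v then (if \<phi> v = y then 2 else 0) else 0)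
     = (if \<phi> x = y then D x else 0) + (if x = u then (if \<phi> u = y then 1 else 0) else 0)" for x
    using pebble_move_count[OF assms(4), of x] by (auto split: if_splits)
  then have "(\<Sum>x\<in>V. (if \<phi> x = y then D' x else 0) + (if x = v then (if \<phi> v = y then 2 else 0) else 0))
     = (\<Sum>x\<in>V. (if \<phi> x = y then D x else 0) + (if x = u then (if \<phi> u = y then 1 else 0) else 0))"
    by simp
  then show ?thesis unfolding pebble_image_def sum.distrib using assms(1-3) by simp
qed

lemma one_move_rtranclp_image:
  assumes "finite V" "\<And>v u. E v u \<Longrightarrow> v \<in> V \<and> u \<in> V"
    and hom: "\<And>v u. E v u \<Longrightarrow> \<phi> v \<noteq> \<phi> u \<Longrightarrow> E' (\<phi> v) (\<phi> u)"
    and "(one_move E)\<^sup>*\<^sup>* D D'"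
  shows "\<exists>Z. (one_move E')\<^sup>*\<^sup>* (pebble_image V \<phi> D) Z \<and> (\<forall>y. pebble_image V \<phi> D' y \<le> Z y)"
  using assms(4)
proof (induction rule: rtranclp_induct)
  case base
  then show ?case by blast
next
  case (step Y Y')
  then obtain Z where Z: "(one_move E')\<^sup>*\<^sup>* (pebble_image V \<phi> D) Z"
      "\<forall>y. pebble_image V \<phi> Y y \<le> Z y" by blast
  from step.hyps(2) obtain v u where move: "pebble_move E v u Y Y'" by (auto simp: one_move_def)
  then have E: "E v u" by (simp add: pebble_move_def)
  then have "v \<in> V" "u \<in> V" using assms(2) by auto
  note count = pebble_image_move_count[OF assms(1) this move, of \<phi>]
  show ?case
  proof (cases "\<phi> v = \<phi> u")
    case True
    then have "pebble_image V \<phi> Y' y \<le> pebble_image V \<phi> Y y" for y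
      using count[of y] by (auto split: if_splits)
    then show ?thesis using Z le_trans by blast
  next
    case False
    let ?P = "pebble_image V \<phi> Y"
    have "2 \<le> ?P (\<phi> v)" using count[of "\<phi> v"] False by simp
    moreover have "pebble_image V \<phi> Y' = (?P(\<phi> v := ?P (\<phi> v) - 2))(\<phi> u := (?P(\<phi> v := ?P (\<phi> v) - 2)) (\<phi> u) + 1)"
    proof
      fix y show "pebble_image V \<phi> Y' y = ((?P(\<phi> v := ?P (\<phi> v) - 2))(\<phi> u := (?P(\<phi> v := ?P (\<phi> v) - 2)) (\<phi> u) + 1)) y"
        using count[of y] False by (auto split: if_splits)
    qed
    ultimately have "pebble_move E' (\<phi> v) (\<phi> u) ?P (pebble_image V \<phi> Y')"
      using hom[OF E False] by (simp add: pebble_move_def)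
    then obtain Z' where "pebble_move E' (\<phi> v) (\<phi> u) Z Z'" "\<forall>y. pebble_image V \<phi> Y' y \<le> Z' y"
      using Z(2) by (metis pebble_move_mono)
    then show ?thesis using Z(1) by (metis one_move_def rtranclp.rtrancl_into_rtrancl)
  qed
qed

lemma reachable_image:
  assumes "finite V" "\<And>v u. E v u \<Longrightarrow> v \<in> V \<and> u \<in> V"
    "\<And>v u. E v u \<Longrightarrow> \<phi> v \<noteq> \<phi> u \<Longrightarrow> E' (\<phi> v) (\<phi> u)"
    "reachable E D t" "t \<in> V"
  shows "reachable E' (pebble_image V \<phi> D) (\<phi> t)"
proof -
  obtain Y where Y: "(one_move E)\<^sup>*\<^sup>* D Y" "1 \<le> Y t"
    using assms(4) reachable_iff_rtranclp by metis
  obtain Z where Z: "(one_move E')\<^sup>*\<^sup>* (pebble_image V \<phi> D) Z" "\<forall>y. pebble_image V \<phi> Y y \<le> Z y"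
    using one_move_rtranclp_image[of V E \<phi> E' D Y, OF assms(1-3) Y(1)] by blast
  have "Y t \<le> pebble_image V \<phi> Y (\<phi> t)"
    unfolding pebble_image_def
    using member_le_sum[of t V "\<lambda>x. if \<phi> x = \<phi> t then Y x else 0"] assms(1,5) by simp
  then have "1 \<le> Z (\<phi> t)" using Y(2) Z(2) by (meson le_trans)
  then show ?thesis using Z(1) reachable_iff_rtranclp by metis
qed

lemma sum_pebble_image:
  assumes "finite V" "finite W" "\<phi> ` V \<subseteq> W"
  shows "(\<Sum>y\<in>W. pebble_image V \<phi> D y) = (\<Sum>x\<in>V. D x)"
proof -
  have "(\<Sum>y\<in>W. pebble_image V \<phi> D y) = (\<Sum>x\<in>V. \<Sum>y\<in>W. if \<phi> x = y then D x else 0)"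
    unfolding pebble_image_def by (rule sum.swap)
  also have "\<dots> = (\<Sum>x\<in>V. D x)"
    using assms(2,3) by (intro sum.cong) auto
  finally show ?thesis .
qed

lemma opt_pebbling_le:
  assumes "\<And>x. x \<notin> V \<Longrightarrow> D x = 0" "solvable V E D"
  shows "opt_pebbling V E \<le> (\<Sum>x\<in>V. D x)"
  unfolding opt_pebbling_def by (rule Least_le) (use assms in blast)

lemma opt_pebbling_attained:
  obtains D where "\<And>x. x \<notin> V \<Longrightarrow> D x = 0" "solvable V E D"
    "(\<Sum>x\<in>V. D x) = opt_pebbling V E"
proof -
  define D1 where "D1 = (\<lambda>x. if x \<in> V then 1 else (0::nat))"
  have "(\<forall>x. x \<notin> V \<longrightarrow> D1 x = 0) \<and> solvable V E D1"
    by (auto simp: D1_def solvable_def reachable_def)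
  then have "\<exists>k D. (\<forall>x. x \<notin> V \<longrightarrow> D x = 0) \<and> solvable V E D \<and> (\<Sum>x\<in>V. D x) = k" by blast
  then have "\<exists>D. (\<forall>x. x \<notin> V \<longrightarrow> D x = 0) \<and> solvable V E D \<and> (\<Sum>x\<in>V. D x) = opt_pebbling V E"
    unfolding opt_pebbling_def by (rule LeastI_ex)
  then show thesis using that by blast
qed

lemma opt_pebbling_le_image:
  assumes "finite V" "\<And>v u. E v u \<Longrightarrow> v \<in> V \<and> u \<in> V"
    "\<And>v u. E v u \<Longrightarrow> \<phi> v \<noteq> \<phi> u \<Longrightarrow> E' (\<phi> v) (\<phi> u)"
    and W: "\<phi> ` V = W" and "solvable V E D"
  shows "opt_pebbling W E' \<le> (\<Sum>x\<in>V. D x)"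
proof -
  have "solvable W E' (pebble_image V \<phi> D)"
    unfolding solvable_def
  proof
    fix t assume "t \<in> W"
    then obtain s where "s \<in> V" "t = \<phi> s" using W by blast
    then show "reachable E' (pebble_image V \<phi> D) t"
      using reachable_image[of V E \<phi> E' D s, OF assms(1-3)] assms(5) by (auto simp: solvable_def)
  qed
  moreover have "pebble_image V \<phi> D y = 0" if "y \<notin> W" for y
    using that W unfolding pebble_image_def by (intro sum.neutral) auto
  ultimately have "opt_pebbling W E' \<le> (\<Sum>y\<in>W. pebble_image V \<phi> D y)"
    by (rule_tac opt_pebbling_le)
  also have "\<dots> = (\<Sum>x\<in>V. D x)"
    using assms(1) W by (intro sum_pebble_image) auto
  finally show ?thesis .
qed

lemma solvable_copies:
  assumes "finite V" "\<And>v u. E v u \<Longrightarrow> v \<in> V \<and> u \<in> V" "solvable V E D"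
  shows "solvable (K \<times> V) (\<lambda>p q. fst p = fst q \<and> fst p \<in> K \<and> E (snd p) (snd q))
           (\<lambda>p. if fst p \<in> K then D (snd p) else 0)"
  unfolding solvable_def
proof safe
  fix c t assume "c \<in> K" "t \<in> V"
  have "reachable (\<lambda>p q. fst p = fst q \<and> fst p \<in> K \<and> E (snd p) (snd q))
      (pebble_image V (Pair c) D) (c, t)"
    using reachable_image[of V E "Pair c" _ D t, OF assms(1,2)] assms(3) \<open>c \<in> K\<close> \<open>t \<in> V\<close>
    by (auto simp: solvable_def)
  moreover have "pebble_image V (Pair c) D (c', s) = (if c' = c \<and> s \<in> V then D s else 0)"
    for c' s
    unfolding pebble_image_def using assms(1) by auto
  ultimately show "reachable (\<lambda>p q. fst p = fst q \<and> fst p \<in> K \<and> E (snd p) (snd q))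
      (\<lambda>p. if fst p \<in> K then D (snd p) else 0) (c, t)"
    using \<open>c \<in> K\<close> by (rule_tac reachable_mono) auto
qed

section \<open>The upper bound: folding copies of a small grid\<close>

lemma grid_E_in_grid_V: "grid_E n v u \<Longrightarrow> v \<in> grid_V n \<and> u \<in> grid_V n"
  by (simp add: grid_E_def)

lemma finite_grid_V: "finite (grid_V n)"
  by (simp add: grid_V_def)

text \<open>Clamping to \<open>[0, m - 1]\<close> may contract an edge of an overflowing block but never
  stretches it.\<close>

definition grid_fold :: "nat \<Rightarrow> nat \<Rightarrow> (nat \<times> nat) \<times> nat \<times> nat \<Rightarrow> nat \<times> nat" where
  "grid_fold n m p = (min (fst (fst p) * n + fst (snd p)) (m - 1),
                      min (snd (fst p) * n + snd (snd p)) (m - 1))"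

lemma grid_fold_hom:
  assumes "0 < m" "fst p = fst q" "grid_E n (snd p) (snd q)" "grid_fold n m p \<noteq> grid_fold n m q"
  shows "grid_E m (grid_fold n m p) (grid_fold n m q)"
proof -
  obtain a b i j i' j' where pq: "p = ((a, b), (i, j))" "q = ((a, b), (i', j'))"
    using assms(2) by (metis prod.collapse)
  show ?thesis
    using assms unfolding pq grid_E_def grid_V_def grid_fold_def by auto
qed

lemma grid_fold_image:
  assumes "1 \<le> n" "m \<le> k * n" "0 < m"
  shows "grid_fold n m ` (({0..<k} \<times> {0..<k}) \<times> grid_V n) = grid_V m"
proof
  show "grid_fold n m ` (({0..<k} \<times> {0..<k}) \<times> grid_V n) \<subseteq> grid_V m"
    using assms(3) by (auto simp: grid_fold_def grid_V_def)
next
  show "grid_V m \<subseteq> grid_fold n m ` (({0..<k} \<times> {0..<k}) \<times> grid_V n)"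
  proof safe
    fix x y assume xy: "(x, y) \<in> grid_V m"
    then have "x < k * n" "y < k * n" using assms(2) by (auto simp: grid_V_def)
    then have "x div n < k" "y div n < k" by (simp_all add: less_mult_imp_div_less)
    moreover have "grid_fold n m ((x div n, y div n), (x mod n, y mod n)) = (x, y)"
      using xy by (auto simp: grid_fold_def grid_V_def)
    moreover have "(x mod n, y mod n) \<in> grid_V n"
      using assms(1) by (simp add: grid_V_def)
    ultimately show "(x, y) \<in> grid_fold n m ` (({0..<k} \<times> {0..<k}) \<times> grid_V n)"
      by (intro image_eqI[of _ _ "((x div n, y div n), (x mod n, y mod n))"]) auto
  qed
qed

lemma opt_pebbling_grid_le:
  assumes "1 \<le> n" "m \<le> k * n"
  shows "opt_pebbling (grid_V m) (grid_E m) \<le> k\<^sup>2 * opt_pebbling (grid_V n) (grid_E n)"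
proof (cases "m = 0")
  case True
  then have "opt_pebbling (grid_V m) (grid_E m) \<le> (\<Sum>x\<in>grid_V m. 0)"
    by (intro opt_pebbling_le) (auto simp: grid_V_def solvable_def)
  then show ?thesis by simp
next
  case False
  define K where "K = {0..<k} \<times> {0..<k}"
  obtain D where D: "\<And>x. x \<notin> grid_V n \<Longrightarrow> D x = 0" "solvable (grid_V n) (grid_E n) D"
    "(\<Sum>x\<in>grid_V n. D x) = opt_pebbling (grid_V n) (grid_E n)"
    using opt_pebbling_attained[of "grid_V n" "grid_E n"] by blast
  have "opt_pebbling (grid_V m) (grid_E m)
      \<le> (\<Sum>p\<in>K \<times> grid_V n. if fst p \<in> K then D (snd p) else 0)"
  proof (rule opt_pebbling_le_image)
    show "finite (K \<times> grid_V n)" by (simp add: K_def finite_grid_V)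
    show "solvable (K \<times> grid_V n) (\<lambda>p q. fst p = fst q \<and> fst p \<in> K \<and> grid_E n (snd p) (snd q))
        (\<lambda>p. if fst p \<in> K then D (snd p) else 0)"
      using solvable_copies[OF finite_grid_V grid_E_in_grid_V D(2)] .
    show "grid_fold n m ` (K \<times> grid_V n) = grid_V m"
      unfolding K_def using assms False by (intro grid_fold_image) auto
    show "v \<in> K \<times> grid_V n \<and> u \<in> K \<times> grid_V n"
      if "fst v = fst u \<and> fst v \<in> K \<and> grid_E n (snd v) (snd u)" for v u
      using that grid_E_in_grid_V by (metis mem_Times_iff)
    show "grid_E m (grid_fold n m v) (grid_fold n m u)"
      if "fst v = fst u \<and> fst v \<in> K \<and> grid_E n (snd v) (snd u)"
        and "grid_fold n m v \<noteq> grid_fold n m u" for v u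
      using that False by (intro grid_fold_hom) auto
  qed
  also have "\<dots> = (\<Sum>c\<in>K. \<Sum>s\<in>grid_V n. D s)"
    unfolding sum.cartesian_product by (intro sum.cong) auto
  also have "\<dots> = k\<^sup>2 * opt_pebbling (grid_V n) (grid_E n)"
    using D(3) by (simp add: K_def power2_eq_square)
  finally show ?thesis .
qed

section \<open>The lower bound: a weight that pebbling moves cannot increase\<close>

text \<open>If \<open>h\<close> grows by at most 1 along each edge, a move from \<open>v\<close> to \<open>u\<close> removes weight
  \<open>2 \<cdot> 2^-h(v)\<close> and adds \<open>2^-h(u) \<le> 2 \<cdot> 2^-h(v)\<close>.\<close>

definition pebble_weight :: "'a set \<Rightarrow> ('a \<Rightarrow> nat) \<Rightarrow> ('a \<Rightarrow> nat) \<Rightarrow> real" where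
  "pebble_weight V h D = (\<Sum>x\<in>V. real (D x) * (1/2) ^ h x)"

lemma pebble_weight_move_le:
  assumes "finite V" "\<And>v u. E v u \<Longrightarrow> v \<in> V \<and> u \<in> V"
    and lip: "\<And>v u. E v u \<Longrightarrow> h v \<le> h u + 1" and move: "pebble_move E v u D D'"
  shows "pebble_weight V h D' \<le> pebble_weight V h D"
proof -
  let ?w = "\<lambda>x. (1/2::real) ^ h x"
  have E: "E v u" using move by (simp add: pebble_move_def)
  then have "v \<in> V" "u \<in> V" using assms(2) by auto
  have "real (D' x) * ?w x + (if x = v then 2 * ?w x else 0)
      = real (D x) * ?w x + (if x = u then ?w x else 0)" for x
  proof -
    have "real (D' x + (if x = v then 2 else 0)) = real (D x + (if x = u then 1 else 0))"
      using pebble_move_count[OF move, of x] by presburger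
    then have "real (D' x) + (if x = v then 2 else 0) = real (D x) + (if x = u then 1 else 0)"
      by (simp split: if_splits)
    then have "(real (D' x) + (if x = v then 2 else 0)) * ?w x
        = (real (D x) + (if x = u then 1 else 0)) * ?w x"
      by simp
    then show ?thesis by (simp add: distrib_right split: if_splits)
  qed
  then have "(\<Sum>x\<in>V. real (D' x) * ?w x + (if x = v then 2 * ?w x else 0))
      = (\<Sum>x\<in>V. real (D x) * ?w x + (if x = u then ?w x else 0))"
    by simp
  then have "pebble_weight V h D' + 2 * ?w v = pebble_weight V h D + ?w u"
    unfolding pebble_weight_def sum.distrib using assms(1) \<open>v \<in> V\<close> \<open>u \<in> V\<close> by simp
  moreover have "(1/2::real) ^ (h u + 1) \<le> (1/2) ^ h v"
    using lip[OF E] by (intro power_decreasing) auto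
  then have "?w u \<le> 2 * ?w v" by simp
  ultimately show ?thesis by linarith
qed

lemma pebble_weight_rtranclp_le:
  assumes "finite V" "\<And>v u. E v u \<Longrightarrow> v \<in> V \<and> u \<in> V" "\<And>v u. E v u \<Longrightarrow> h v \<le> h u + 1"
    and "(one_move E)\<^sup>*\<^sup>* D D'"
  shows "pebble_weight V h D' \<le> pebble_weight V h D"
  using assms(4)
proof (induction rule: rtranclp_induct)
  case (step Y Z)
  then obtain v u where "pebble_move E v u Y Z" by (auto simp: one_move_def)
  with pebble_weight_move_le[of V E h v u Y Z, OF assms(1-3)]
  have "pebble_weight V h Z \<le> pebble_weight V h Y" by blast
  then show ?case using step.IH by linarith
qed simp

lemma reachable_imp_pebble_weight_ge_1:
  assumes "finite V" "\<And>v u. E v u \<Longrightarrow> v \<in> V \<and> u \<in> V" "\<And>v u. E v u \<Longrightarrow> h v \<le> h u + 1"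
    and "reachable E D t" "t \<in> V" "h t = 0"
  shows "1 \<le> pebble_weight V h D"
proof -
  obtain Y where Y: "(one_move E)\<^sup>*\<^sup>* D Y" "1 \<le> Y t"
    using assms(4) reachable_iff_rtranclp by metis
  have "real (Y t) * (1/2) ^ h t \<le> pebble_weight V h Y"
    unfolding pebble_weight_def using assms(1,5) by (intro member_le_sum) auto
  then have "1 \<le> pebble_weight V h Y" using Y(2) assms(6) by simp
  then show ?thesis using pebble_weight_rtranclp_le[of V E h D Y, OF assms(1-3) Y(1)] by linarith
qed

definition nat_dist :: "nat \<Rightarrow> nat \<Rightarrow> nat" where
  "nat_dist a b = (a - b) + (b - a)"

definition grid_dist :: "nat \<times> nat \<Rightarrow> nat \<times> nat \<Rightarrow> nat" where
  "grid_dist p q = nat_dist (fst p) (fst q) + nat_dist (snd p) (snd q)"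

lemma grid_E_grid_dist_le: "grid_E n v u \<Longrightarrow> grid_dist v t \<le> grid_dist u t + 1"
  by (cases v; cases u; cases t) (auto simp: grid_E_def grid_dist_def nat_dist_def)

lemma sum_half_pow_nat_dist_bound:
  "(\<Sum>a<n. (1/2::real) ^ nat_dist x a) \<le> (if n \<le> x then (1/2) ^ (x - n) else 3 - 2 * (1/2) ^ (n - x))"
proof (induction n)
  case (Suc n)
  consider "n < x" | "n = x" | "x < n" by linarith
  then show ?case
  proof cases
    case 1
    then have "nat_dist x n = x - n" "x - n = Suc (x - Suc n)" by (simp_all add: nat_dist_def)
    then show ?thesis using Suc 1 by simp
  next
    case 2
    then show ?thesis using Suc by (simp add: nat_dist_def)
  next
    case 3
    then have "nat_dist x n = n - x" "Suc n - x = Suc (n - x)" by (simp_all add: nat_dist_def)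
    then show ?thesis using Suc 3 by simp
  qed
qed simp

lemma sum_half_pow_nat_dist_le: "(\<Sum>a<n. (1/2::real) ^ nat_dist x a) \<le> 3"
proof (cases "n \<le> x")
  case True
  then have "(\<Sum>a<n. (1/2::real) ^ nat_dist x a) \<le> (1/2) ^ (x - n)"
    using sum_half_pow_nat_dist_bound[where n=n and x=x] by simp
  also have "\<dots> \<le> 1" by (simp add: power_le_one)
  finally show ?thesis by simp
next
  case False
  then have "(\<Sum>a<n. (1/2::real) ^ nat_dist x a) \<le> 3 - 2 * (1/2) ^ (n - x)"
    using sum_half_pow_nat_dist_bound[where n=n and x=x] by simp
  also have "\<dots> \<le> 3" by simp
  finally show ?thesis .
qed

lemma sum_half_pow_grid_dist_le: "(\<Sum>t\<in>grid_V n. (1/2::real) ^ grid_dist x t) \<le> 9"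
proof -
  have "(\<Sum>t\<in>grid_V n. (1/2::real) ^ grid_dist x t)
      = (\<Sum>a<n. (1/2::real) ^ nat_dist (fst x) a) * (\<Sum>b<n. (1/2::real) ^ nat_dist (snd x) b)"
    unfolding grid_V_def sum.cartesian_product sum_product atLeast0LessThan
    by (simp add: grid_dist_def power_add split_def)
  also have "\<dots> \<le> 3 * 3"
    by (intro mult_mono sum_half_pow_nat_dist_le) (auto intro: sum_nonneg)
  finally show ?thesis by simp
qed

lemma solvable_grid_size_ge:
  assumes "solvable (grid_V n) (grid_E n) D"
  shows "real (n\<^sup>2) \<le> 9 * real (\<Sum>x\<in>grid_V n. D x)"
proof -
  have "real (n\<^sup>2) = (\<Sum>t\<in>grid_V n. 1)" by (simp add: grid_V_def power2_eq_square)
  also have "\<dots> \<le> (\<Sum>t\<in>grid_V n. pebble_weight (grid_V n) (\<lambda>x. grid_dist x t) D)"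
  proof (rule sum_mono)
    fix t assume "t \<in> grid_V n"
    then show "1 \<le> pebble_weight (grid_V n) (\<lambda>x. grid_dist x t) D"
      using assms grid_E_grid_dist_le unfolding solvable_def
      by (intro reachable_imp_pebble_weight_ge_1[of "grid_V n" "grid_E n"])
        (auto simp: finite_grid_V grid_E_in_grid_V grid_dist_def nat_dist_def)
  qed
  also have "\<dots> = (\<Sum>x\<in>grid_V n. real (D x) * (\<Sum>t\<in>grid_V n. (1/2) ^ grid_dist x t))"
    unfolding pebble_weight_def sum_distrib_left by (rule sum.swap)
  also have "\<dots> \<le> (\<Sum>x\<in>grid_V n. real (D x) * 9)"
    by (intro sum_mono mult_left_mono sum_half_pow_grid_dist_le) auto
  also have "\<dots> = 9 * real (\<Sum>x\<in>grid_V n. D x)"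
    by (simp add: sum_distrib_left mult.commute)
  finally show ?thesis .
qed

lemma opt_pebbling_grid_ge: "real (n\<^sup>2) \<le> 9 * real (opt_pebbling (grid_V n) (grid_E n))"
  using opt_pebbling_attained[of "grid_V n" "grid_E n"] solvable_grid_size_ge by metis

section \<open>From the two bounds to convergence\<close>

lemma LIMSEQ_SUP_of_lower_estimate:
  fixes b :: "nat \<Rightarrow> real"
  assumes bdd: "bdd_above (range b)"
    and est: "\<And>n m. 1 \<le> n \<Longrightarrow> 1 \<le> m \<Longrightarrow> b n - C * real n / real m \<le> b m"
  shows "b \<longlonglongrightarrow> (SUP n\<in>{1..}. b n)"
proof (rule LIMSEQ_I)
  fix r :: real assume "0 < r"
  let ?S = "SUP n\<in>{1..}. b n"
  have bdd': "bdd_above (b ` {1..})" using bdd by (rule bdd_above_mono) auto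
  have "?S - r/2 < ?S" using \<open>0 < r\<close> by simp
  then obtain n0 where n0: "1 \<le> n0" "?S - r/2 < b n0"
    by (subst (asm) less_cSUP_iff[OF _ bdd']) auto
  obtain N :: nat where N: "2 * \<bar>C\<bar> * real n0 / r < real N" using reals_Archimedean2 by blast
  have "norm (b m - ?S) < r" if "max N 1 \<le> m" for m
  proof -
    have m: "1 \<le> m" "real N \<le> real m" using that by auto
    have "2 * \<bar>C\<bar> * real n0 < r * real N"
      using N \<open>0 < r\<close> by (simp add: divide_less_eq mult.commute)
    also have "\<dots> \<le> r * real m" using m(2) \<open>0 < r\<close> by simp
    finally have "2 * \<bar>C\<bar> * real n0 < r * real m" .
    then have "\<bar>C\<bar> * real n0 / real m < r / 2" using m(1) by (simp add: divide_less_eq)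
    moreover have "C * real n0 / real m \<le> \<bar>C\<bar> * real n0 / real m"
      by (intro divide_right_mono mult_right_mono) auto
    moreover have "b m \<le> ?S" using m(1) bdd' by (intro cSUP_upper) auto
    ultimately show ?thesis using est[OF n0(1) m(1)] n0(2) by simp
  qed
  then show "\<exists>N. \<forall>m\<ge>N. norm (b m - ?S) < r" by blast
qed

text \<open>With \<open>k = \<lfloor>m/n\<rfloor> + 1\<close> we have \<open>m \<le> k n \<le> m + n\<close>, so the upper bound compares
  \<open>f m\<close> with \<open>f n\<close> at a relative loss of \<open>(m/(m + n))\<^sup>2 \<ge> 1 - 2n/m\<close>.\<close>

lemma ratio_lower_estimate:
  fixes f :: "nat \<Rightarrow> nat"
  assumes L: "\<And>n. real (n\<^sup>2) \<le> c * real (f n)"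
    and U: "\<And>n m k. 1 \<le> n \<Longrightarrow> m \<le> k * n \<Longrightarrow> f m \<le> k\<^sup>2 * f n"
    and "1 \<le> n" "1 \<le> m"
  shows "real (n\<^sup>2) / real (f n) - 2 * c * real n / real m \<le> real (m\<^sup>2) / real (f m)"
proof -
  have pos: "0 < real (f j)" "0 < c" if "1 \<le> j" for j
  proof -
    have "1 \<le> real (j\<^sup>2)" using that by simp
    then have "0 < c * real (f j)" using L[of j] by linarith
    then show "0 < real (f j)" "0 < c" by (auto simp: zero_less_mult_iff)
  qed
  define k where "k = m div n + 1"
  have "m div n * n + m mod n = m" "m mod n < n" "k * n = m div n * n + n"
    using \<open>1 \<le> n\<close> by (simp_all add: k_def)
  then have "m \<le> k * n" "k * n \<le> m + n" "1 \<le> k" by (linarith, linarith, simp add: k_def)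
  define b where "b = real (n\<^sup>2) / real (f n)"
  define q where "q = real m / (real m + real n)"
  have b: "0 \<le> b" "b \<le> c"
    using L[of n] pos[OF \<open>1 \<le> n\<close>] by (auto simp: b_def divide_le_eq)
  have q: "0 \<le> q" "q \<le> 1" using \<open>1 \<le> m\<close> by (auto simp: q_def)
  have "q \<le> real m / (real k * real n)"
    unfolding q_def using \<open>k * n \<le> m + n\<close> \<open>1 \<le> m\<close> \<open>1 \<le> k\<close> \<open>1 \<le> n\<close>
    by (intro divide_left_mono) (auto simp flip: of_nat_mult of_nat_add)
  then have "q\<^sup>2 * b \<le> (real m / (real k * real n))\<^sup>2 * b"
    using q b by (intro mult_right_mono power_mono) auto
  also have "\<dots> = real (m\<^sup>2) / real (k\<^sup>2 * f n)"
    using \<open>1 \<le> n\<close> \<open>1 \<le> k\<close> pos[OF \<open>1 \<le> n\<close>] by (simp add: b_def field_simps power2_eq_square)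
  also have "\<dots> \<le> real (m\<^sup>2) / real (f m)"
    using U[OF \<open>1 \<le> n\<close> \<open>m \<le> k * n\<close>] pos[OF \<open>1 \<le> m\<close>] pos[OF \<open>1 \<le> n\<close>] \<open>1 \<le> k\<close>
    by (intro divide_left_mono) (simp_all only: of_nat_le_iff, auto)
  finally have "q\<^sup>2 * b \<le> real (m\<^sup>2) / real (f m)" .
  have "1 - q = real n / (real m + real n)" using \<open>1 \<le> m\<close> by (simp add: q_def field_simps)
  also have "\<dots> \<le> real n / real m" using \<open>1 \<le> m\<close> by (intro divide_left_mono) auto
  finally have "1 - q \<le> real n / real m" .
  then have "(1 - q) * ((1 + q) * b) \<le> real n / real m * (2 * c)"
    using q b by (intro mult_mono) auto
  then have "b - q\<^sup>2 * b \<le> 2 * c * real n / real m"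
    by (simp add: algebra_simps power2_eq_square)
  with \<open>q\<^sup>2 * b \<le> real (m\<^sup>2) / real (f m)\<close> show ?thesis unfolding b_def by linarith
qed
theorem mainTheorem1:
  shows "convergent (\<lambda>n. real (n^2) / real (opt_pebbling (grid_V n) (grid_E n)))"
proof -
  let ?f = "\<lambda>n. opt_pebbling (grid_V n) (grid_E n)"
  let ?b = "\<lambda>n. real (n\<^sup>2) / real (?f n)"
  have "?b n \<le> 9" for n
    using opt_pebbling_grid_ge[of n] by (cases "?f n = 0") (auto simp: divide_le_eq)
  then have "bdd_above (range ?b)" by (intro bdd_aboveI2)
  moreover have "?b n - 2 * 9 * real n / real m \<le> ?b m" if "1 \<le> n" "1 \<le> m" for n m
    using ratio_lower_estimate[OF opt_pebbling_grid_ge opt_pebbling_grid_le that] .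
  ultimately have "?b \<longlonglongrightarrow> (SUP n\<in>{1..}. ?b n)"
    by (rule LIMSEQ_SUP_of_lower_estimate)
  then show ?thesis by (auto intro: convergentI)
qed

end
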